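(* Let $q\in[0,2)$, $s'>0$, $\beta>2$ and $\delta\in(0,1)$. Consider the model $\mathbf{Y}=\boldsymbol{\Theta}+\mathbf{E}$, where $\boldsymbol{\Theta}\in\mathbb{R}^{p\times r}$ is deterministic and $\mathbf{E}$ has i.i.d. $N(0,1)$ entries. Let $\widehat{\boldsymbol{\Theta}}=\operatorname{argmin}_{\boldsymbol{\Theta}\in\mathbb{R}^{p\times r}}\{\|\mathbf{Y}-\boldsymbol{\Theta}\|_{\mathrm F}^2+\operatorname{pen}(\boldsymbol{\Theta})\}$. Then there is a constant $C>0$ depending only on $q,\beta,\delta$ such that \[ \sup_{\boldsymbol{\Theta}\in\mathcal{F}_q(s',p)}\mathsf{E}\|\widehat{\boldsymbol{\Theta}}-\boldsymbol{\Theta}\|_{\mathrm F}^2\le Ck'\Bigl(r+\log\frac{\mathrm{e}p}{k'}\Bigr), \] where $k'=\min\{k\in[p]: t_k^{q/2}k\ge s'\}$, and $k'=p$ if this set is empty.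
   Context: For $k\in[p]$, $t_k=r+\sqrt{2r\beta\log\frac{\mathrm{e}p}{k}}+\beta\log\frac{\mathrm{e}p}{k}$; $\operatorname{pen}(k)=(1+\delta)^2\sum_{i=1}^k t_i$ (with $\operatorname{pen}(0)=0$), and $\operatorname{pen}(\boldsymbol{\Theta})=\operatorname{pen}(|\operatorname{supp}(\boldsymbol{\Theta})|)$, where $\operatorname{supp}(\boldsymbol{\Theta})$ is the set of indices of nonzero rows. Weak-$\ell_q$ radius: with row norms sorted decreasingly $\|\boldsymbol{\Theta}_{(1)*}\|\ge\dots\ge\|\boldsymbol{\Theta}_{(p)*}\|$, $\|\boldsymbol{\Theta}\|_{q,w}=\max_{j\in[p]}j\|\boldsymbol{\Theta}_{(j)*}\|^q$ (for $q=0$, the number of nonzero rows); $\mathcal{F}_q(s',p)=\{\boldsymbol{\Theta}\in\mathbb{R}^{p\times r}:\|\boldsymbol{\Theta}\|_{q,w}\le s'\}$. *)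

theory Defs
  imports "HOL-Probability.Probability"
begin

text \<open>Matrices in R^{p x r} are functions nat \<times> nat \<Rightarrow> real; only the entries on
  the index set {..<p} \<times> {..<r} matter (row i < p, column j < r).\<close>

definition idx :: "nat \<Rightarrow> nat \<Rightarrow> (nat \<times> nat) set" where
  "idx p r = {..<p} \<times> {..<r}"

definition frob2 :: "nat \<Rightarrow> nat \<Rightarrow> (nat \<times> nat \<Rightarrow> real) \<Rightarrow> real" where
  "frob2 p r A = (\<Sum>ij\<in>idx p r. (A ij)\<^sup>2)"

definition row_norm :: "nat \<Rightarrow> (nat \<times> nat \<Rightarrow> real) \<Rightarrow> nat \<Rightarrow> real" where
  "row_norm r A i = sqrt (\<Sum>j<r. (A (i, j))\<^sup>2)"

definition row_supp :: "nat \<Rightarrow> nat \<Rightarrow> (nat \<times> nat \<Rightarrow> real) \<Rightarrow> nat set" where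
  "row_supp p r A = {i. i < p \<and> (\<exists>j<r. A (i, j) \<noteq> 0)}"

definition tk :: "real \<Rightarrow> nat \<Rightarrow> nat \<Rightarrow> nat \<Rightarrow> real" where
  "tk \<beta> p r k = real r + sqrt (2 * real r * \<beta> * ln (exp 1 * real p / real k))
                 + \<beta> * ln (exp 1 * real p / real k)"

definition pen :: "real \<Rightarrow> real \<Rightarrow> nat \<Rightarrow> nat \<Rightarrow> nat \<Rightarrow> real" where
  "pen \<beta> \<delta> p r k = (1 + \<delta>)\<^sup>2 * (\<Sum>i=1..k. tk \<beta> p r i)"

definition pen_mat :: "real \<Rightarrow> real \<Rightarrow> nat \<Rightarrow> nat \<Rightarrow> (nat \<times> nat \<Rightarrow> real) \<Rightarrow> real" where
  "pen_mat \<beta> \<delta> p r A = pen \<beta> \<delta> p r (card (row_supp p r A))"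

definition objective :: "real \<Rightarrow> real \<Rightarrow> nat \<Rightarrow> nat \<Rightarrow> (nat \<times> nat \<Rightarrow> real)
    \<Rightarrow> (nat \<times> nat \<Rightarrow> real) \<Rightarrow> real" where
  "objective \<beta> \<delta> p r Y A = frob2 p r (\<lambda>ij. Y ij - A ij) + pen_mat \<beta> \<delta> p r A"

definition is_pen_estimator :: "real \<Rightarrow> real \<Rightarrow> nat \<Rightarrow> nat
    \<Rightarrow> ((nat \<times> nat \<Rightarrow> real) \<Rightarrow> (nat \<times> nat \<Rightarrow> real)) \<Rightarrow> bool" where
  "is_pen_estimator \<beta> \<delta> p r est \<longleftrightarrow>
     (\<forall>Y A. objective \<beta> \<delta> p r Y (est Y) \<le> objective \<beta> \<delta> p r Y A)"

text \<open>Row norms sorted decreasingly; the j-th largest (1-indexed) is entry j-1.\<close>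
definition sorted_row_norms :: "nat \<Rightarrow> nat \<Rightarrow> (nat \<times> nat \<Rightarrow> real) \<Rightarrow> real list" where
  "sorted_row_norms p r A = rev (sort (map (row_norm r A) [0..<p]))"

definition weak_lq :: "real \<Rightarrow> nat \<Rightarrow> nat \<Rightarrow> (nat \<times> nat \<Rightarrow> real) \<Rightarrow> real" where
  "weak_lq q p r A =
     (if q = 0 then real (card (row_supp p r A))
      else Max ((\<lambda>j. real j * (sorted_row_norms p r A ! (j - 1)) powr q) ` {1..p}))"

definition F_q :: "real \<Rightarrow> real \<Rightarrow> nat \<Rightarrow> nat \<Rightarrow> (nat \<times> nat \<Rightarrow> real) set" where
  "F_q q s' p r = {A. weak_lq q p r A \<le> s'}"

definition kprime :: "real \<Rightarrow> real \<Rightarrow> real \<Rightarrow> nat \<Rightarrow> nat \<Rightarrow> nat" where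
  "kprime q \<beta> s' p r =
     (let K = {k\<in>{1..p}. tk \<beta> p r k powr (q / 2) * real k \<ge> s'}
      in if K = {} then p else Min K)"

definition noise :: "nat \<Rightarrow> nat \<Rightarrow> (nat \<times> nat \<Rightarrow> real) measure" where
  "noise p r = PiM (idx p r) (\<lambda>_. density lborel std_normal_density)"

end

(*
  Write Y = Theta + E with Gaussian noise E, and T(m) = t_1 + ... + t_m, so that the
  penalty of a matrix with m nonzero rows is (1+delta)^2 T(m).

  For a set U of rows the noise energy N(U) = sum_{i in U} |E_i|^2 is chi-square with
      |U| r degrees of freedom.  A Chernoff argument bounds E (N(U) - T(|U|))_+, and a union
      bound over all subsets (at most (e p/m)^m of size m) shows that the total excess
      V(E) = sum_U (N(U) - T(|U|))_+ has expectation at most (r+2)/(1 - exp(1 - beta/2)).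
  (2) Deterministic oracle inequality (section of that name).  If N(U) <= T(|U|) + V for all U, then for every
      set J of rows the estimator satisfies
        |hat Theta - Theta|_F^2 <= C_delta (V + sum_{i notin J} |Theta_i|^2 + T(|J|)).
  (3) Approximation (section "Approximation of weak-l_q signals").  For Theta in the weak-l_q ball, with k = k' and h = t_k, the rows
      with |Theta_i|^2 >= h form a set J whose signal tail and threshold sum T(|J|) are
      both of order k (r + log(e p / k)).
  Taking expectations in (2) with V = V(E) and J as in (3) gives the theorem.
*)
theory Submission
  imports Defs
begin

section \<open>Chi-square tails\<close>

lemma neg_ln_one_minus_le:
  fixes z :: real assumes "0 \<le> z" "z < 1"
  shows "- ln (1 - z) \<le> z + z\<^sup>2 / (2 * (1 - z))"
proof -
  define h where "h w = w + w\<^sup>2 / (2 * (1 - w)) + ln (1 - w)" for w :: real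
  have "h 0 \<le> h z"
  proof (rule DERIV_nonneg_imp_nondecreasing[OF assms(1)])
    fix x assume x: "0 \<le> x" "x \<le> z"
    then have x1: "x < 1" using assms by linarith
    have "DERIV h x :> 1 + ((2 * x) * (2 * (1 - x)) - x\<^sup>2 * (-2)) / (2 * (1 - x))\<^sup>2 + (-1) / (1 - x)"
      unfolding h_def using x1
      by (auto intro!: derivative_eq_intros simp: power2_eq_square)
    moreover have "1 + ((2 * x) * (2 * (1 - x)) - x\<^sup>2 * (-2)) / (2 * (1 - x))\<^sup>2 + (-1) / (1 - x)
                   = x\<^sup>2 / (2 * (1 - x)\<^sup>2)"
      using x1 by (simp add: divide_simps power2_eq_square) (simp add: algebra_simps)
    ultimately show "\<exists>y. DERIV h x :> y \<and> y \<ge> 0" by fastforce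
  qed
  then show ?thesis unfolding h_def by simp
qed

definition std_gauss :: "real measure" where
  "std_gauss = density lborel std_normal_density"

lemma prob_space_std_gauss: "prob_space std_gauss"
  unfolding std_gauss_def by (rule prob_space_normal_density) simp

lemma noise_eq_PiM: "noise p r = PiM (idx p r) (\<lambda>_. std_gauss)"
  unfolding noise_def std_gauss_def ..

lemma prob_space_noise: "prob_space (noise p r)"
  unfolding noise_eq_PiM by (intro prob_space_PiM prob_space_std_gauss)

text \<open>Moment generating function of a squared standard Gaussian:
  E exp(lam X^2) = (1 - 2 lam)^(-1/2), obtained by recognising a rescaled normal density.\<close>
lemma std_gauss_mgf_sq:
  fixes lam :: real assumes l: "lam < 1/2"
  shows "(\<integral>\<^sup>+ x. ennreal (exp (lam * x\<^sup>2)) \<partial>std_gauss) = ennreal (1 / sqrt (1 - 2*lam))"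
proof -
  define \<sigma> where "\<sigma> = 1 / sqrt (1 - 2*lam)"
  have s0: "1 - 2*lam > 0" using l by simp
  have sp: "\<sigma> > 0" unfolding \<sigma>_def using s0 by simp
  have dens: "std_normal_density x * exp (lam * x\<^sup>2) = \<sigma> * normal_density 0 \<sigma> x" for x
  proof -
    have ss: "\<sigma>\<^sup>2 = 1 / (1 - 2*lam)" unfolding \<sigma>_def using s0 by (simp add: power_divide)
    have "std_normal_density x * exp (lam * x\<^sup>2) = 1 / sqrt (2*pi) * exp (- x\<^sup>2 / 2 + lam * x\<^sup>2)"
      by (simp add: std_normal_density_def mult_exp_exp)
    also have "- x\<^sup>2 / 2 + lam * x\<^sup>2 = -(x - 0)\<^sup>2 / (2 * \<sigma>\<^sup>2)"
      unfolding ss using s0 by (simp add: field_simps)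
    also have "1 / sqrt (2*pi) = \<sigma> * (1 / sqrt (2 * pi * \<sigma>\<^sup>2))"
      using sp by (simp add: real_sqrt_mult)
    finally show ?thesis unfolding normal_density_def by simp
  qed
  have total: "(\<integral>\<^sup>+ x. ennreal (normal_density 0 \<sigma> x) \<partial>lborel) = 1"
  proof -
    interpret prob_space "density lborel (normal_density 0 \<sigma>)"
      by (rule prob_space_normal_density[OF sp])
    show ?thesis using emeasure_space_1 by (simp add: emeasure_density)
  qed
  have "(\<integral>\<^sup>+ x. ennreal (exp (lam * x\<^sup>2)) \<partial>std_gauss)
        = (\<integral>\<^sup>+ x. ennreal (std_normal_density x) * ennreal (exp (lam * x\<^sup>2)) \<partial>lborel)"
    unfolding std_gauss_def by (subst nn_integral_density) auto
  also have "\<dots> = (\<integral>\<^sup>+ x. ennreal \<sigma> * ennreal (normal_density 0 \<sigma> x) \<partial>lborel)"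
    by (rule nn_integral_cong) (simp add: dens ennreal_mult[symmetric] sp less_imp_le flip: ennreal_mult')
  also have "\<dots> = ennreal \<sigma> * (\<integral>\<^sup>+ x. ennreal (normal_density 0 \<sigma> x) \<partial>lborel)"
    by (rule nn_integral_cmult) auto
  also have "\<dots> = ennreal \<sigma>" unfolding total by simp
  finally show ?thesis unfolding \<sigma>_def .
qed

definition row_sq :: "nat \<Rightarrow> (nat \<times> nat \<Rightarrow> real) \<Rightarrow> nat \<Rightarrow> real" where
  "row_sq r A i = (\<Sum>j<r. (A (i, j))\<^sup>2)"

definition energy :: "nat \<Rightarrow> nat set \<Rightarrow> (nat \<times> nat \<Rightarrow> real) \<Rightarrow> real" where
  "energy r U A = (\<Sum>i\<in>U. row_sq r A i)"

lemma row_sq_nonneg: "row_sq r A i \<ge> 0"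
  unfolding row_sq_def by (simp add: sum_nonneg)

lemma energy_cartesian: "finite U \<Longrightarrow> energy r U A = (\<Sum>ij\<in>U \<times> {..<r}. (A ij)\<^sup>2)"
  unfolding energy_def row_sq_def by (simp add: sum.cartesian_product)

lemma energy_measurable:
  assumes U: "U \<subseteq> {..<p}"
  shows "(\<lambda>E. energy r U E) \<in> borel_measurable (noise p r)"
proof -
  have fU: "finite U" using U finite_subset by blast
  have "(\<lambda>E. E ij) \<in> borel_measurable (noise p r)" if "ij \<in> U \<times> {..<r}" for ij
  proof -
    have "ij \<in> idx p r" using U that unfolding idx_def by auto
    then have "(\<lambda>E. E ij) \<in> measurable (noise p r) std_gauss"
      unfolding noise_eq_PiM by (rule measurable_component_singleton)
    then show ?thesis using measurable_cong_sets by (fastforce simp: std_gauss_def)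
  qed
  then show ?thesis unfolding energy_cartesian[OF fU] by measurable
qed

text \<open>The energy of |U| rows of Gaussian noise is chi-square with |U| r degrees of freedom;
  its moment generating function factorises over the entries.\<close>
lemma energy_mgf:
  fixes lam :: real
  assumes U: "U \<subseteq> {..<p}" and l: "lam < 1/2"
  shows "(\<integral>\<^sup>+ E. ennreal (exp (lam * energy r U E)) \<partial>noise p r)
         = ennreal ((1 / sqrt (1 - 2*lam)) ^ (card U * r))"
proof -
  interpret product_sigma_finite "\<lambda>_::nat\<times>nat. std_gauss"
    unfolding product_sigma_finite_def
    using prob_space_imp_sigma_finite[OF prob_space_std_gauss] by simp
  define J where "J = U \<times> {..<r}"
  have fU: "finite U" using U finite_subset by blast
  have JI: "J \<subseteq> idx p r" unfolding J_def idx_def using U by auto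
  have fI: "finite (idx p r)" unfolding idx_def by simp
  define g where "g ij x = ennreal (if ij \<in> J then exp (lam * x\<^sup>2) else 1)" for ij and x :: real
  have factor: "ennreal (exp (lam * energy r U E)) = (\<Prod>ij\<in>idx p r. g ij (E ij))" for E
  proof -
    have "exp (lam * energy r U E) = (\<Prod>ij\<in>J. exp (lam * (E ij)\<^sup>2))"
      unfolding energy_cartesian[OF fU] J_def[symmetric] sum_distrib_left
      by (rule exp_sum) (simp add: J_def fU)
    also have "\<dots> = (\<Prod>ij\<in>idx p r. (if ij \<in> J then exp (lam * (E ij)\<^sup>2) else 1))"
      by (rule prod.mono_neutral_cong_left[OF fI JI]) auto
    finally show ?thesis unfolding g_def by (simp add: prod_ennreal)
  qed
  have entry: "integral\<^sup>N std_gauss (g ij) = (if ij \<in> J then ennreal (1 / sqrt (1 - 2*lam)) else 1)" for ij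
  proof -
    interpret prob_space std_gauss by (rule prob_space_std_gauss)
    show ?thesis unfolding g_def using std_gauss_mgf_sq[OF l] emeasure_space_1 by simp
  qed
  have "(\<integral>\<^sup>+ E. ennreal (exp (lam * energy r U E)) \<partial>noise p r)
        = (\<Prod>ij\<in>idx p r. integral\<^sup>N std_gauss (g ij))"
    unfolding noise_eq_PiM factor
    by (rule product_nn_integral_prod[OF fI]) (simp add: g_def std_gauss_def)
  also have "\<dots> = (\<Prod>ij\<in>J. ennreal (1 / sqrt (1 - 2*lam)))"
    unfolding entry by (rule prod.mono_neutral_cong_right[OF fI JI]) auto
  also have "\<dots> = ennreal ((1 / sqrt (1 - 2*lam)) ^ (card U * r))"
    using l by (simp add: ennreal_power J_def card_cartesian_product)
  finally show ?thesis .
qed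


lemma pos_part_le_exp:
  fixes y lam :: real assumes "lam > 0"
  shows "max y 0 \<le> exp (lam * y) / lam"
proof -
  have "lam * y \<le> exp (lam * y)" using exp_ge_add_one_self[of "lam*y"] by linarith
  moreover have "0 \<le> exp (lam * y) / lam" using assms by simp
  ultimately show ?thesis using assms by (auto simp: field_simps)
qed

text \<open>The exponent in the Chernoff bound with the choice lam = u/(v + 2u), where
  v^2 is the number of degrees of freedom and u^2 the deviation level.\<close>
lemma chernoff_exponent:
  fixes u v T :: real
  assumes u: "u > 0" and v: "v > 0" and T: "T \<ge> v\<^sup>2 + 2 * v * u + 2*u\<^sup>2"
  defines "lam \<equiv> u / (v + 2*u)"
  shows "- lam * T + v\<^sup>2 * lam + v\<^sup>2 * lam\<^sup>2 / (1 - 2*lam) \<le> - u\<^sup>2"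
proof -
  have d: "v + 2*u > 0" using u v by simp
  have l0: "lam \<ge> 0" unfolding lam_def using u v by simp
  have "- lam * T \<le> - lam * (v\<^sup>2 + 2 * v * u + 2*u\<^sup>2)"
    using l0 T by (simp add: mult_left_mono)
  moreover have "v\<^sup>2 * lam\<^sup>2 / (1 - 2*lam) = v * u\<^sup>2 / (v + 2*u)"
  proof -
    define w where "w = v + 2*u"
    have w0: "w \<noteq> 0" "v \<noteq> 0" using d v unfolding w_def by auto
    have "1 - 2*lam = v / w" unfolding lam_def w_def using d by (simp add: field_simps)
    then have "v\<^sup>2 * lam\<^sup>2 / (1 - 2*lam) = v\<^sup>2 * (u/w)\<^sup>2 / (v/w)" by (simp add: lam_def w_def)
    also have "\<dots> = v * u\<^sup>2 / w" using w0 by (simp add: field_simps power2_eq_square)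
    finally show ?thesis unfolding w_def .
  qed
  moreover have "- lam * (v\<^sup>2 + 2 * v * u + 2*u\<^sup>2) + v\<^sup>2 * lam + v * u\<^sup>2 / (v + 2*u) = - u\<^sup>2"
    unfolding lam_def using d by (simp add: divide_simps power2_eq_square) (simp add: algebra_simps)
  ultimately show ?thesis by linarith
qed

lemma inv_sqrt_power:
  fixes a :: real assumes "a > 0"
  shows "(1 / sqrt a) ^ n = exp (- (real n / 2) * ln a)"
proof -
  have "(1 / sqrt a) ^ n = exp (ln ((1 / sqrt a) ^ n))" using assms by simp
  also have "ln ((1 / sqrt a) ^ n) = real n * ln (1 / sqrt a)" by (rule ln_realpow)
  also have "ln (1 / sqrt a) = - (ln a / 2)" using assms by (simp add: ln_div ln_sqrt)
  finally show ?thesis by simp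
qed

lemma chi_square_chernoff:
  fixes x T :: real and n :: nat
  assumes n: "n > 0" and x: "x > 0" and T: "T \<ge> real n + 2 * sqrt (real n * x) + 2*x"
  defines "lam \<equiv> sqrt x / (sqrt (real n) + 2 * sqrt x)"
  shows "0 < lam" "2 * lam < 1"
    and "exp (- lam * T) / lam * (1 / sqrt (1 - 2*lam)) ^ n \<le> (sqrt (real n / x) + 2) * exp (-x)"
proof -
  define u where "u = sqrt x"
  define v where "v = sqrt (real n)"
  have u0: "u > 0" unfolding u_def using x by simp
  have v0: "v > 0" unfolding v_def using n by simp
  have lam: "lam = u / (v + 2*u)" unfolding lam_def u_def v_def ..
  show l0: "0 < lam" unfolding lam using u0 v0 by simp
  show l2: "2 * lam < 1" unfolding lam using u0 v0 by (simp add: field_simps)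
  have nv: "real n = v\<^sup>2" unfolding v_def by simp
  have xu: "x = u\<^sup>2" unfolding u_def using x by simp
  have T': "T \<ge> v\<^sup>2 + 2 * v * u + 2*u\<^sup>2"
    using T unfolding nv xu using u0 v0 by (simp add: real_sqrt_mult)
  have "- ln (1 - 2*lam) \<le> 2*lam + (2*lam)\<^sup>2 / (2 * (1 - 2*lam))"
    by (rule neg_ln_one_minus_le) (use l0 l2 in auto)
  then have "(real n / 2) * (- ln (1 - 2*lam)) \<le> (real n / 2) * (2*lam + (2*lam)\<^sup>2 / (2 * (1 - 2*lam)))"
    by (intro mult_left_mono) auto
  also have "\<dots> = v\<^sup>2 * lam + v\<^sup>2 * lam\<^sup>2 / (1 - 2*lam)"
    unfolding nv using l2 by (simp add: power2_eq_square field_simps)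
  finally have mgf: "(1 / sqrt (1 - 2*lam)) ^ n \<le> exp (v\<^sup>2 * lam + v\<^sup>2 * lam\<^sup>2 / (1 - 2*lam))"
    using inv_sqrt_power[of "1 - 2*lam" n] l2 by simp
  have "exp (- lam * T) * (1 / sqrt (1 - 2*lam)) ^ n
        \<le> exp (- lam * T) * exp (v\<^sup>2 * lam + v\<^sup>2 * lam\<^sup>2 / (1 - 2*lam))"
    using mgf by (intro mult_left_mono) auto
  also have "\<dots> = exp (- lam * T + v\<^sup>2 * lam + v\<^sup>2 * lam\<^sup>2 / (1 - 2*lam))"
    by (simp add: mult_exp_exp add.assoc)
  also have "\<dots> \<le> exp (-x)"
    using chernoff_exponent[OF u0 v0 T'] xu unfolding lam by simp
  finally have main: "exp (- lam * T) * (1 / sqrt (1 - 2*lam)) ^ n \<le> exp (-x)" .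
  have inv: "1 / lam = sqrt (real n / x) + 2"
    unfolding lam using u0 v0 by (simp add: field_simps u_def v_def real_sqrt_divide)
  have "exp (- lam * T) / lam * (1 / sqrt (1 - 2*lam)) ^ n
        = (1/lam) * (exp (- lam * T) * (1 / sqrt (1 - 2*lam)) ^ n)" by simp
  also have "\<dots> \<le> (1/lam) * exp (-x)" using main l0 by (intro mult_left_mono) auto
  finally show "exp (- lam * T) / lam * (1 / sqrt (1 - 2*lam)) ^ n \<le> (sqrt (real n / x) + 2) * exp (-x)"
    unfolding inv .
qed

lemma energy_excess_bound:
  fixes x T :: real
  assumes U: "U \<subseteq> {..<p}" and n: "card U * r > 0" and x: "x > 0"
    and T: "T \<ge> real (card U * r) + 2 * sqrt (real (card U * r) * x) + 2*x"
  shows "(\<integral>\<^sup>+ E. ennreal (max (energy r U E - T) 0) \<partial>noise p r)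
         \<le> ennreal ((sqrt (real (card U * r) / x) + 2) * exp (-x))"
proof -
  define lam where "lam = sqrt x / (sqrt (real (card U * r)) + 2 * sqrt x)"
  note ch = chi_square_chernoff[OF n x T, folded lam_def]
  have "(\<integral>\<^sup>+ E. ennreal (max (energy r U E - T) 0) \<partial>noise p r)
      \<le> (\<integral>\<^sup>+ E. ennreal (exp (- lam * T) / lam) * ennreal (exp (lam * energy r U E)) \<partial>noise p r)"
  proof (rule nn_integral_mono)
    fix E
    have "max (energy r U E - T) 0 \<le> exp (lam * (energy r U E - T)) / lam"
      by (rule pos_part_le_exp[OF ch(1)])
    also have "\<dots> = exp (- lam * T) / lam * exp (lam * energy r U E)"
      by (simp add: algebra_simps exp_diff exp_minus field_simps)
    finally show "ennreal (max (energy r U E - T) 0)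
                  \<le> ennreal (exp (- lam * T) / lam) * ennreal (exp (lam * energy r U E))"
      using ch(1) by (simp add: ennreal_mult'[symmetric] ennreal_leI)
  qed
  also have "\<dots> = ennreal (exp (- lam * T) / lam) * (\<integral>\<^sup>+ E. ennreal (exp (lam * energy r U E)) \<partial>noise p r)"
    by (rule nn_integral_cmult) (use energy_measurable[OF U] in measurable)
  also have "\<dots> = ennreal (exp (- lam * T) / lam * (1 / sqrt (1 - 2*lam)) ^ (card U * r))"
    using energy_mgf[OF U, of lam r] ch(1,2) by (simp add: ennreal_mult[symmetric])
  also have "\<dots> \<le> ennreal ((sqrt (real (card U * r) / x) + 2) * exp (-x))"
    using ch(3) by (rule ennreal_leI)
  finally show ?thesis .
qed

section \<open>The thresholds t_k\<close>

definition lg :: "nat \<Rightarrow> nat \<Rightarrow> real" where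
  "lg p k = ln (exp 1 * real p / real k)"

definition tsum :: "real \<Rightarrow> nat \<Rightarrow> nat \<Rightarrow> nat \<Rightarrow> real" where
  "tsum \<beta> p r m = (\<Sum>j=1..m. tk \<beta> p r j)"

lemma tk_lg: "tk \<beta> p r k = real r + sqrt (2 * real r * \<beta> * lg p k) + \<beta> * lg p k"
  unfolding tk_def lg_def ..

lemma pen_tsum: "pen \<beta> \<delta> p r k = (1 + \<delta>)\<^sup>2 * tsum \<beta> p r k"
  unfolding pen_def tsum_def ..

lemma lg_ge_1: assumes "1 \<le> k" "k \<le> p" shows "lg p k \<ge> 1"
proof -
  have "exp 1 * real p / real k \<ge> exp 1" using assms by (simp add: field_simps)
  then have "ln (exp 1 * real p / real k) \<ge> ln (exp 1)"
    by (subst ln_le_cancel_iff) (use assms in auto)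
  then show ?thesis unfolding lg_def by simp
qed

lemma lg_antimono: assumes "1 \<le> j" "j \<le> k" "k \<le> p" shows "lg p k \<le> lg p j"
proof -
  have "exp 1 * real p / real k \<le> exp 1 * real p / real j"
    using assms by (intro divide_left_mono) auto
  moreover have "exp 1 * real p / real k > 0" using assms by simp
  ultimately show ?thesis unfolding lg_def by simp
qed

lemma tk_antimono:
  assumes "\<beta> > 0" "1 \<le> j" "j \<le> k" "k \<le> p"
  shows "tk \<beta> p r k \<le> tk \<beta> p r j"
proof -
  have L: "lg p k \<le> lg p j" by (rule lg_antimono) (use assms in auto)
  have "2 * real r * \<beta> * lg p k \<le> 2 * real r * \<beta> * lg p j"
    using L assms by (intro mult_left_mono) auto
  then have "sqrt (2 * real r * \<beta> * lg p k) \<le> sqrt (2 * real r * \<beta> * lg p j)"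
    by (rule real_sqrt_le_mono)
  moreover have "\<beta> * lg p k \<le> \<beta> * lg p j" using L assms by simp
  ultimately show ?thesis unfolding tk_lg by linarith
qed

lemma tk_ge: assumes "\<beta> > 0" "1 \<le> j" "j \<le> p" shows "tk \<beta> p r j \<ge> real r + \<beta>"
proof -
  have L1: "lg p j \<ge> 1" by (rule lg_ge_1) (use assms in auto)
  then have "\<beta> * lg p j \<ge> \<beta>" using assms by simp
  moreover have "sqrt (2 * real r * \<beta> * lg p j) \<ge> 0" using assms L1 by simp
  ultimately show ?thesis unfolding tk_lg by linarith
qed

text \<open>By AM-GM, t_j <= 2 r + 2 beta lg p j.\<close>
lemma tk_le:
  assumes b: "\<beta> > 0" and j: "1 \<le> j" "j \<le> p"
  shows "tk \<beta> p r j \<le> 2 * real r + 2 * \<beta> * lg p j"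
proof -
  have L1: "lg p j \<ge> 1" by (rule lg_ge_1[OF j])
  have "(real r + \<beta> * lg p j)\<^sup>2 = 2 * real r * \<beta> * lg p j + ((real r)\<^sup>2 + (\<beta> * lg p j)\<^sup>2)"
    by (simp add: power2_eq_square algebra_simps)
  then have "2 * real r * \<beta> * lg p j \<le> (real r + \<beta> * lg p j)\<^sup>2" by simp
  then have "sqrt (2 * real r * \<beta> * lg p j) \<le> sqrt ((real r + \<beta> * lg p j)\<^sup>2)"
    by (rule real_sqrt_le_mono)
  also have "\<dots> = real r + \<beta> * lg p j" using b L1 by simp
  finally show ?thesis unfolding tk_lg by simp
qed

lemma tsum_mono:
  assumes "\<beta> > 0" "a \<le> b" "b \<le> p"
  shows "tsum \<beta> p r a \<le> tsum \<beta> p r b"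
  unfolding tsum_def
proof (rule sum_mono2)
  show "0 \<le> tk \<beta> p r j" if "j \<in> {1..b} - {1..a}" for j
    using tk_ge[OF assms(1), of j p r] that assms by auto
qed (use assms in auto)

lemma tsum_nonneg: assumes "\<beta> > 0" "a \<le> p" shows "tsum \<beta> p r a \<ge> 0"
  using tsum_mono[of \<beta> 0 a p r] assms by (simp add: tsum_def)

text \<open>Since t_j decreases, every t_j with j <= m is at least t_m.\<close>
lemma tsum_lower:
  assumes "\<beta> > 0" "m \<le> p"
  shows "tsum \<beta> p r m \<ge> real m * (real r + sqrt (2 * real r * \<beta> * lg p m) + \<beta> * lg p m)"
proof -
  have "(\<Sum>j=1..m. tk \<beta> p r m) \<le> tsum \<beta> p r m" unfolding tsum_def
    by (rule sum_mono) (rule tk_antimono, use assms in auto)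
  then show ?thesis by (simp add: tk_lg)
qed

text \<open>T is subadditive in the sense needed to compare penalties of nested supports.\<close>
lemma tsum_diff_le:
  assumes b: "\<beta> > 0" and ab: "a \<le> b" "b \<le> p"
  shows "tsum \<beta> p r b - tsum \<beta> p r a \<le> tsum \<beta> p r (b - a)"
proof -
  have "{1..b} = {1..a} \<union> {a<..b}" using ab by auto
  then have "tsum \<beta> p r b = tsum \<beta> p r a + (\<Sum>j\<in>{a<..b}. tk \<beta> p r j)"
    unfolding tsum_def by (simp add: sum.union_disjoint ivl_disj_int)
  moreover have "(\<Sum>j\<in>{a<..b}. tk \<beta> p r j) = (\<Sum>i\<in>{1..b-a}. tk \<beta> p r (i + a))"
    by (rule sum.reindex_bij_witness[of _ "\<lambda>i. i + a" "\<lambda>j. j - a"]) (use ab in auto)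
  moreover have "\<dots> \<le> tsum \<beta> p r (b - a)"
    unfolding tsum_def by (rule sum_mono) (rule tk_antimono, use b ab in auto)
  ultimately show ?thesis by simp
qed

lemma power_self_le_exp_fact: "(real m) ^ m \<le> exp (real m) * fact m"
proof (induction m)
  case 0 then show ?case by simp
next
  case (Suc m)
  have step: "(real m + 1) ^ m \<le> exp 1 * (real m) ^ m"
  proof (cases "m = 0")
    case True then show ?thesis by simp
  next
    case False
    then have m0: "real m > 0" by simp
    have "(real m + 1) ^ m = (real m) ^ m * (1 + 1 / real m) ^ m"
      using m0 by (simp add: power_mult_distrib[symmetric] field_simps)
    also have "(1 + 1 / real m) ^ m \<le> exp (1 / real m) ^ m"
      by (intro power_mono) (use m0 in auto)
    also have "exp (1 / real m) ^ m = exp 1" using m0 by (simp add: exp_of_nat_mult[symmetric])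
    finally show ?thesis using m0 by (simp add: mult.commute)
  qed
  have "(real (Suc m)) ^ Suc m = (real m + 1) * (real m + 1) ^ m" by (simp add: add.commute)
  also have "\<dots> \<le> (real m + 1) * (exp 1 * (exp (real m) * fact m))"
    using step Suc.IH by (intro mult_left_mono order_trans[OF step] mult_left_mono) auto
  also have "\<dots> = exp (real (Suc m)) * fact (Suc m)" by (simp add: exp_add algebra_simps)
  finally show ?case .
qed

lemma binomial_le_exp_lg:
  assumes "1 \<le> m" "m \<le> p"
  shows "real (p choose m) \<le> exp (real m * lg p m)"
proof -
  have m0: "real m > 0" using assms by simp
  have "real (p choose m) * fact m \<le> real p ^ m"
    using binomial_fact_pow[of p m] by (metis of_nat_fact of_nat_le_iff of_nat_mult of_nat_power)
  then have "real (p choose m) \<le> real p ^ m / fact m" by (simp add: field_simps)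
  also have "\<dots> \<le> real p ^ m / ((real m) ^ m / exp (real m))"
    using power_self_le_exp_fact[of m] m0 by (intro divide_left_mono) (auto simp: field_simps)
  also have "\<dots> = (exp 1 * real p / real m) ^ m"
    using m0 by (simp add: power_divide power_mult_distrib exp_of_nat_mult[symmetric] mult.commute)
  also have "\<dots> = exp (real m * lg p m)"
    unfolding lg_def using m0 assms by (simp add: exp_of_nat_mult)
  finally show ?thesis .
qed

text \<open>sum_{j<=m} lg p j <= m (1 + lg p m), again by Stirling.\<close>
lemma sum_lg_le:
  assumes m: "1 \<le> m" and p: "p \<ge> 1"
  shows "(\<Sum>j=1..m. lg p j) \<le> real m * (1 + lg p m)"
proof -
  have "(\<Sum>j=1..m. lg p j) = (\<Sum>j=1..m. ln (exp 1 * real p) - ln (real j))"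
    unfolding lg_def using p by (intro sum.cong) (auto simp: ln_div)
  also have "\<dots> = real m * ln (exp 1 * real p) - ln (fact m)"
  proof -
    have "ln (fact m :: real) = ln (\<Prod>j=1..m. real j)" by (simp add: fact_prod)
    also have "\<dots> = (\<Sum>j=1..m. ln (real j))" by (rule ln_prod) auto
    finally show ?thesis by (simp add: sum_subtractf)
  qed
  also have "ln (fact m) \<ge> real m * ln (real m) - real m"
  proof -
    have "ln ((real m) ^ m) \<le> ln (exp (real m) * fact m)"
      using power_self_le_exp_fact[of m] m by (subst ln_le_cancel_iff) auto
    then show ?thesis by (simp add: ln_realpow ln_mult)
  qed
  then have "real m * ln (exp 1 * real p) - ln (fact m)
             \<le> real m * ln (exp 1 * real p) - (real m * ln (real m) - real m)" by simp
  also have "\<dots> = real m * (1 + lg p m)" unfolding lg_def using m p by (simp add: ln_div algebra_simps)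
  finally show ?thesis .
qed

lemma mult_lg_le:
  assumes m: "1 \<le> m" "m \<le> p" and k: "1 \<le> k" "k \<le> p" and c: "real m \<le> c * real k"
  shows "real m * lg p m \<le> c * real k * lg p k + real k"
proof -
  have "lg p m = lg p k + ln (real k / real m)" unfolding lg_def using m k
    by (simp add: ln_div ln_mult)
  then have "real m * lg p m = real m * lg p k + real m * ln (real k / real m)"
    by (simp add: algebra_simps)
  also have "real m * lg p k \<le> c * real k * lg p k"
    using c lg_ge_1[OF k] by (intro mult_right_mono) auto
  also have "real m * ln (real k / real m) \<le> real m * (real k / real m - 1)"
    using m k by (intro mult_left_mono ln_le_minus_one) auto
  also have "\<dots> \<le> real k" using m by (simp add: field_simps)
  finally show ?thesis by simp
qed

lemma tsum_upper:
  assumes b: "\<beta> > 0" and m: "m \<le> p" and k: "1 \<le> k" "k \<le> p"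
    and c: "real m \<le> c * real k" "c \<ge> 1"
  shows "tsum \<beta> p r m \<le> (2*c + 4*\<beta>*c + 2*\<beta>) * (real k * (real r + lg p k))"
proof (cases "m = 0")
  case True
  then show ?thesis using b c lg_ge_1[OF k] k by (simp add: tsum_def)
next
  case False
  then have m1: "1 \<le> m" by simp
  have Lk: "lg p k \<ge> 1" by (rule lg_ge_1[OF k])
  have "tsum \<beta> p r m \<le> (\<Sum>j=1..m. 2 * real r + 2 * \<beta> * lg p j)"
    unfolding tsum_def by (rule sum_mono) (rule tk_le[OF b], use m in auto)
  also have "\<dots> = 2 * real r * real m + 2 * \<beta> * (\<Sum>j=1..m. lg p j)"
    by (simp add: sum.distrib sum_distrib_left)
  also have "(\<Sum>j=1..m. lg p j) \<le> real m + real m * lg p m"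
    using sum_lg_le[OF m1] k m by (simp add: algebra_simps)
  also have "real m * lg p m \<le> c * real k * lg p k + real k" by (rule mult_lg_le[OF m1 m k c(1)])
  finally have A: "tsum \<beta> p r m \<le> 2 * real r * real m + 2 * \<beta> * (real m + (c * real k * lg p k + real k))"
    using b by (simp add: mult_left_mono)
  have kL: "real k \<le> real k * lg p k" using Lk k by (simp add: mult_le_cancel_left1)
  have "real m \<le> c * (real k * lg p k)" using c kL by (smt (verit) mult_left_mono)
  then have "real m + (c * real k * lg p k + real k) \<le> (2 * c + 1) * (real k * lg p k)"
    using kL by (simp add: algebra_simps)
  from mult_left_mono[OF this, of "2*\<beta>"]
  have "2 * \<beta> * (real m + (c * real k * lg p k + real k)) \<le> (4*\<beta>*c + 2*\<beta>) * (real k * lg p k)"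
    using b by (simp add: algebra_simps)
  moreover have "2 * real r * real m \<le> 2 * c * (real k * real r)"
    using mult_right_mono[OF c(1), of "real r"] by (simp add: algebra_simps)
  moreover have "(4*\<beta>*c + 2*\<beta>) * (real k * lg p k) \<le> (2*c + 4*\<beta>*c + 2*\<beta>) * (real k * lg p k)"
    and "2 * c * (real k * real r) \<le> (2*c + 4*\<beta>*c + 2*\<beta>) * (real k * real r)"
    using b c k Lk by (intro mult_right_mono; simp)+
  ultimately show ?thesis using A by (simp add: algebra_simps)
qed

section \<open>The expected excess of the noise energy\<close>

text \<open>V(E): the total excess of the noise energy of all row sets over the thresholds.
  It dominates every single excess, so N(U) <= T(|U|) + V(E) for all U.\<close>
definition excess :: "real \<Rightarrow> nat \<Rightarrow> nat \<Rightarrow> (nat \<times> nat \<Rightarrow> real) \<Rightarrow> real" where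
  "excess \<beta> p r E = (\<Sum>U\<in>Pow {..<p}. max (energy r U E - tsum \<beta> p r (card U)) 0)"

lemma excess_nonneg: "excess \<beta> p r E \<ge> 0"
  unfolding excess_def by (simp add: sum_nonneg)

lemma energy_le_excess:
  assumes "U \<subseteq> {..<p}"
  shows "energy r U E \<le> tsum \<beta> p r (card U) + excess \<beta> p r E"
proof -
  have "max (energy r U E - tsum \<beta> p r (card U)) 0 \<le> excess \<beta> p r E"
    unfolding excess_def
    by (rule member_le_sum[where f = "\<lambda>U. max (energy r U E - tsum \<beta> p r (card U)) 0"])
       (use assms in auto)
  then show ?thesis by linarith
qed

lemma excess_measurable: "(\<lambda>E. excess \<beta> p r E) \<in> borel_measurable (noise p r)"
  unfolding excess_def
proof (rule borel_measurable_sum)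
  fix U assume "U \<in> Pow {..<p}"
  then have "U \<subseteq> {..<p}" by simp
  from energy_measurable[OF this, of r]
  show "(\<lambda>E. max (energy r U E - tsum \<beta> p r (card U)) 0) \<in> borel_measurable (noise p r)"
    by measurable
qed

lemma sum_Pow_card:
  fixes f :: "nat \<Rightarrow> real"
  assumes "finite A"
  shows "(\<Sum>U\<in>Pow A. f (card U)) = (\<Sum>m\<le>card A. real (card A choose m) * f m)"
proof -
  have "(\<Sum>U\<in>Pow A. f (card U)) = (\<Sum>m\<le>card A. \<Sum>U\<in>{U. U \<in> Pow A \<and> card U = m}. f (card U))"
    by (rule sum.group[symmetric]) (use assms in \<open>auto intro: card_mono\<close>)
  also have "\<dots> = (\<Sum>m\<le>card A. real (card A choose m) * f m)"
  proof (rule sum.cong[OF refl])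
    fix m
    have "(\<Sum>U\<in>{U. U \<in> Pow A \<and> card U = m}. f (card U)) = real (card {B. B \<subseteq> A \<and> card B = m}) * f m"
      by simp
    then show "(\<Sum>U\<in>{U. U \<in> Pow A \<and> card U = m}. f (card U)) = real (card A choose m) * f m"
      by (simp only: n_subsets[OF assms])
  qed
  finally show ?thesis .
qed

text \<open>For one set U of m rows the threshold T(m) exceeds the chi-square tail level with
  x = beta m lg(p,m)/2, so the expected excess is exponentially small in m lg(p,m).\<close>
lemma energy_excess_tsum:
  assumes b: "\<beta> > 2" and r: "r \<ge> 1" and U: "U \<subseteq> {..<p}" and m: "card U = m" "1 \<le> m"
  shows "(\<integral>\<^sup>+ E. ennreal (max (energy r U E - tsum \<beta> p r m) 0) \<partial>noise p r)
         \<le> ennreal ((real r + 2) * exp (- (\<beta> * real m * lg p m / 2)))"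
proof -
  have mp: "m \<le> p" using U m card_mono[of "{..<p}" U] by auto
  define L where "L = lg p m"
  define x where "x = \<beta> * real m * L / 2"
  define R where "R = real (m * r)"
  have L1: "L \<ge> 1" unfolding L_def by (rule lg_ge_1) (use m mp in auto)
  have x0: "x > 0" unfolding x_def using b m L1 by simp
  have sq: "2 * sqrt (R * x) = real m * sqrt (2 * real r * \<beta> * L)"
  proof -
    have "R * x = (real m * sqrt (2 * real r * \<beta> * L) / 2)\<^sup>2"
      unfolding R_def x_def using b L1 by (simp add: power2_eq_square power_divide field_simps)
    then show ?thesis using b L1 by simp
  qed
  have T: "tsum \<beta> p r m \<ge> R + 2 * sqrt (R * x) + 2 * x"
    using tsum_lower[of \<beta> m p r] b mp
    unfolding sq unfolding R_def x_def L_def by (simp add: algebra_simps)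
  have "(\<integral>\<^sup>+ E. ennreal (max (energy r U E - tsum \<beta> p r m) 0) \<partial>noise p r)
        \<le> ennreal ((sqrt (R / x) + 2) * exp (-x))"
    using energy_excess_bound[OF U _ x0, where T = "tsum \<beta> p r m"] m r T by (simp add: R_def)
  also have "sqrt (R / x) \<le> real r"
  proof -
    have "\<beta> \<le> \<beta> * L" using b L1 by (simp add: mult_le_cancel_left1)
    then have "\<beta> * L \<ge> 2" using b by linarith
    then have "R / x \<le> real r" unfolding R_def x_def using m r by (simp add: field_simps)
    then have "sqrt (R / x) \<le> sqrt (real r)" by (rule real_sqrt_le_mono)
    also have "sqrt (real r) \<le> real r"
      using r real_sqrt_le_mono[of "real r" "real r * real r"] by simp
    finally show ?thesis .
  qed
  finally show ?thesis unfolding x_def L_def by (simp add: ennreal_leI order_trans)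
qed

lemma energy_excess_set:
  assumes b: "\<beta> > 2" and r: "r \<ge> 1" and U: "U \<subseteq> {..<p}"
  shows "(\<integral>\<^sup>+ E. ennreal (max (energy r U E - tsum \<beta> p r (card U)) 0) \<partial>noise p r)
         \<le> ennreal ((real r + 2) * exp (- (\<beta> * real (card U) * lg p (card U) / 2)))"
proof (cases "card U = 0")
  case True
  then have "U = {}" using U finite_subset[of U "{..<p}"] by auto
  then show ?thesis by (simp add: energy_def tsum_def)
next
  case False
  then show ?thesis using energy_excess_tsum[OF b r U] by simp
qed

text \<open>The union bound over the (p choose m) <= (e p/m)^m sets of size m leaves a geometric
  factor q^m with q = exp(1 - beta/2) < 1.\<close>
lemma union_bound_term:
  assumes b: "\<beta> > 2" and mp: "m \<le> p"
  shows "real (p choose m) * exp (- (\<beta> * real m * lg p m / 2)) \<le> exp (- (\<beta>/2 - 1)) ^ m"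
proof (cases "m = 0")
  case True then show ?thesis by simp
next
  case False
  then have m: "1 \<le> m" "m \<le> p" using mp by auto
  have L1: "lg p m \<ge> 1" by (rule lg_ge_1[OF m])
  have "real (p choose m) * exp (- (\<beta> * real m * lg p m / 2))
        \<le> exp (real m * lg p m) * exp (- (\<beta> * real m * lg p m / 2))"
    using binomial_le_exp_lg[OF m] by (intro mult_right_mono) auto
  also have "\<dots> = exp (- ((\<beta>/2 - 1) * (real m * lg p m)))"
    by (simp add: mult_exp_exp algebra_simps)
  also have "\<dots> \<le> exp (- ((\<beta>/2 - 1) * real m))"
    using L1 b m by (simp add: mult_le_cancel_left1)
  also have "\<dots> = exp (- (\<beta>/2 - 1)) ^ m"
    by (simp add: exp_of_nat_mult[symmetric] algebra_simps)
  finally show ?thesis .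
qed

lemma excess_expectation:
  assumes b: "\<beta> > 2" and r: "r \<ge> 1"
  shows "(\<integral>\<^sup>+ E. ennreal (excess \<beta> p r E) \<partial>noise p r)
         \<le> ennreal ((real r + 2) / (1 - exp (- (\<beta>/2 - 1))))"
proof -
  define q where "q = exp (- (\<beta>/2 - 1))"
  have q0: "0 < q" "q < 1" unfolding q_def using b by auto
  define bnd where "bnd m = (real r + 2) * exp (- (\<beta> * real m * lg p m / 2))" for m
  have "(\<integral>\<^sup>+ E. ennreal (excess \<beta> p r E) \<partial>noise p r)
       = (\<integral>\<^sup>+ E. (\<Sum>U\<in>Pow {..<p}. ennreal (max (energy r U E - tsum \<beta> p r (card U)) 0)) \<partial>noise p r)"
    unfolding excess_def by (intro nn_integral_cong sum_ennreal[symmetric]) simp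
  also have "\<dots> = (\<Sum>U\<in>Pow {..<p}. \<integral>\<^sup>+ E. ennreal (max (energy r U E - tsum \<beta> p r (card U)) 0) \<partial>noise p r)"
    by (rule nn_integral_sum) (use energy_measurable in measurable)
  also have "\<dots> \<le> (\<Sum>U\<in>Pow {..<p}. ennreal (bnd (card U)))"
    unfolding bnd_def by (intro sum_mono energy_excess_set[OF b r]) simp
  also have "\<dots> = ennreal (\<Sum>m\<le>p. real (p choose m) * bnd m)"
    using sum_Pow_card[of "{..<p}" bnd] by (simp add: sum_ennreal bnd_def)
  also have "(\<Sum>m\<le>p. real (p choose m) * bnd m) \<le> (\<Sum>m<Suc p. (real r + 2) * q ^ m)"
    unfolding lessThan_Suc_atMost
  proof (rule sum_mono)
    fix m assume "m \<in> {..p}"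
    then have "real (p choose m) * exp (- (\<beta> * real m * lg p m / 2)) \<le> q ^ m"
      unfolding q_def using union_bound_term[OF b] by simp
    from mult_left_mono[OF this, of "real r + 2"]
    show "real (p choose m) * bnd m \<le> (real r + 2) * q ^ m" unfolding bnd_def by (simp add: algebra_simps)
  qed
  also have "\<dots> = (real r + 2) * ((1 - q ^ Suc p) / (1 - q))"
    using q0 by (subst sum_distrib_left[symmetric], subst sum_gp_strict) simp
  also have "\<dots> \<le> (real r + 2) / (1 - q)"
    using q0 by (simp add: divide_right_mono)
  finally show ?thesis unfolding q_def by (simp add: ennreal_leI)
qed

section \<open>A deterministic oracle inequality\<close>

lemma frob2_rows: "frob2 p r A = energy r {..<p} A"
  unfolding frob2_def idx_def energy_def row_sq_def by (simp add: sum.cartesian_product)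

lemma energy_nonneg: "energy r U A \<ge> 0"
  unfolding energy_def by (simp add: sum_nonneg row_sq_nonneg)

lemma energy_split:
  assumes "finite P" "U \<subseteq> P"
  shows "energy r P A = energy r U A + energy r (P - U) A"
  unfolding energy_def using assms by (metis sum.subset_diff add.commute)

lemma energy_mono: "finite U' \<Longrightarrow> U \<subseteq> U' \<Longrightarrow> energy r U A \<le> energy r U' A"
  unfolding energy_def by (rule sum_mono2) (auto simp: row_sq_nonneg)

lemma energy_cong:
  "(\<And>i j. i \<in> U \<Longrightarrow> j < r \<Longrightarrow> A (i, j) = B (i, j)) \<Longrightarrow> energy r U A = energy r U B"
  unfolding energy_def row_sq_def by (auto intro!: sum.cong)

lemma row_outside_supp:
  "i \<notin> row_supp p r A \<Longrightarrow> i < p \<Longrightarrow> j < r \<Longrightarrow> A (i, j) = 0"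
  unfolding row_supp_def by auto

lemma row_supp_subset: "row_supp p r A \<subseteq> {..<p}"
  unfolding row_supp_def by auto

lemma objective_split:
  "objective \<beta> \<delta> p r Y A
   = energy r (row_supp p r A) (\<lambda>ij. Y ij - A ij) + energy r ({..<p} - row_supp p r A) Y
     + (1 + \<delta>)\<^sup>2 * tsum \<beta> p r (card (row_supp p r A))"
proof -
  have "energy r ({..<p} - row_supp p r A) (\<lambda>ij. Y ij - A ij) = energy r ({..<p} - row_supp p r A) Y"
    by (rule energy_cong) (auto simp: row_outside_supp)
  then show ?thesis
    unfolding objective_def pen_mat_def pen_tsum frob2_rows
    using energy_split[of "{..<p}" "row_supp p r A" r "\<lambda>ij. Y ij - A ij"] row_supp_subset by simp
qed

text \<open>Comparing the estimator with the candidate that keeps exactly the rows U of Y.\<close>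
lemma estimator_vs_restriction:
  fixes Y :: "nat \<times> nat \<Rightarrow> real"
  assumes b: "\<beta> > 0" and est: "is_pen_estimator \<beta> \<delta> p r est" and U: "U \<subseteq> {..<p}"
  defines "S \<equiv> row_supp p r (est Y)"
  shows "energy r S (\<lambda>ij. Y ij - est Y ij) + energy r ({..<p} - S) Y + (1+\<delta>)\<^sup>2 * tsum \<beta> p r (card S)
         \<le> energy r ({..<p} - U) Y + (1+\<delta>)\<^sup>2 * tsum \<beta> p r (card U)"
proof -
  define A where "A ij = (if fst ij \<in> U then Y ij else 0)" for ij
  have fU: "finite U" using U finite_subset by blast
  have "row_supp p r A \<subseteq> U" unfolding row_supp_def A_def by auto
  then have "card (row_supp p r A) \<le> card U" using fU by (rule card_mono[rotated])
  moreover have "card U \<le> p" using U card_mono[of "{..<p}" U] by auto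
  ultimately have pen: "tsum \<beta> p r (card (row_supp p r A)) \<le> tsum \<beta> p r (card U)"
    by (rule tsum_mono[OF b])
  have "frob2 p r (\<lambda>ij. Y ij - A ij) = energy r U (\<lambda>ij. Y ij - A ij) + energy r ({..<p} - U) (\<lambda>ij. Y ij - A ij)"
    unfolding frob2_rows using energy_split[OF _ U] by simp
  also have "\<dots> = energy r ({..<p} - U) Y"
    by (simp add: energy_def row_sq_def A_def)
  finally have "objective \<beta> \<delta> p r Y A \<le> energy r ({..<p} - U) Y + (1+\<delta>)\<^sup>2 * tsum \<beta> p r (card U)"
    unfolding objective_def pen_mat_def pen_tsum using pen by (simp add: mult_left_mono)
  moreover have "objective \<beta> \<delta> p r Y (est Y) \<le> objective \<beta> \<delta> p r Y A"
    using est unfolding is_pen_estimator_def by blast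
  ultimately show ?thesis unfolding objective_split S_def by linarith
qed

lemma square_sum_le:
  fixes a b e :: real assumes "e > 0"
  shows "(a + b)\<^sup>2 \<le> (1 + e) * b\<^sup>2 + (1 + 1/e) * a\<^sup>2"
proof -
  have "0 \<le> (sqrt e * b - a / sqrt e)\<^sup>2" by simp
  also have "\<dots> = e * b\<^sup>2 - 2 * a * b + a\<^sup>2 / e"
    using assms by (simp add: power2_eq_square field_simps)
  finally show ?thesis by (simp add: power2_eq_square field_simps)
qed

lemma energy_add_le_weighted:
  assumes "e > 0" "\<And>ij. A ij = B ij + C ij"
  shows "energy r U A \<le> (1 + e) * energy r U C + (1 + 1/e) * energy r U B"
  unfolding energy_def row_sq_def assms(2) sum_distrib_left sum.distrib[symmetric]
  by (intro sum_mono) (rule square_sum_le[OF assms(1)])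

lemma energy_add_le:
  assumes "\<And>ij. A ij = B ij + C ij"
  shows "energy r U A \<le> 2 * energy r U B + 2 * energy r U C"
  using energy_add_le_weighted[of 1 A B C r U] assms by simp

lemma energy_uminus: "energy r U (\<lambda>ij. - A ij) = energy r U A"
  unfolding energy_def row_sq_def by simp

lemma energy_diff_commute: "energy r U (\<lambda>ij. A ij - B ij) = energy r U (\<lambda>ij. B ij - A ij)"
  unfolding energy_def row_sq_def by (simp add: power2_commute)

definition oracle_const :: "real \<Rightarrow> real" where
  "oracle_const \<delta> = (2 + 2 / (\<delta> * (1 + \<delta>))) * (5 + 1 / \<delta>) + 10"

lemma oracle_const_pos: "\<delta> > 0 \<Longrightarrow> oracle_const \<delta> > 0"
  unfolding oracle_const_def by (simp add: add_pos_pos)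

text \<open>The arithmetic that turns the two basic inequalities of the oracle argument
  (fit on the estimated support, and the decomposition of the risk) into the final bound.\<close>
lemma oracle_arith:
  fixes \<delta> D Tk Tm V \<tau> F G :: real
  assumes d: "0 < \<delta>" "\<delta> < 1" and nonneg: "D \<ge> 0" "Tk \<ge> 0" "Tm \<ge> 0" "V \<ge> 0" "\<tau> \<ge> 0"
    and fit: "D + (1 + \<delta>)\<^sup>2 * Tk \<le> (1 + \<delta>) * (Tk + V) + (1 + 1/\<delta>) * \<tau> + (1 + \<delta>)\<^sup>2 * Tm"
    and risk: "F \<le> 2 * D + 2 * (Tk + V) + 2 * G + 2 * (Tm + V) + \<tau>"
    and discarded: "G \<le> (1 + \<delta>)\<^sup>2 * Tm"
  shows "F \<le> oracle_const \<delta> * (V + \<tau> + Tm)"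
proof -
  define c where "c = (1 + \<delta>)\<^sup>2"
  define dd where "dd = \<delta> * (1 + \<delta>)"
  define K where "K = 2 + 2 / dd"
  have dd0: "dd > 0" unfolding dd_def using d by simp
  have K0: "K > 0" unfolding K_def using dd0 by (simp add: add_pos_pos)
  have c4: "c \<le> 4" unfolding c_def using mult_mono[of "1+\<delta>" 2 "1+\<delta>" 2] d by (simp add: power2_eq_square)
  have fit': "D + dd * Tk \<le> (1 + \<delta>) * V + (1 + 1/\<delta>) * \<tau> + c * Tm"
    using fit unfolding dd_def c_def by (simp add: power2_eq_square algebra_simps)
  have "2 * D + 2 * Tk \<le> K * (D + dd * Tk)"
    unfolding K_def using nonneg dd0 by (simp add: field_simps)
  also have "\<dots> \<le> K * ((1 + \<delta>) * V + (1 + 1/\<delta>) * \<tau> + c * Tm)"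
    using fit' K0 by (intro mult_left_mono) auto
  finally have "F \<le> (K * (1 + \<delta>) + 4) * V + (K * (1 + 1/\<delta>) + 1) * \<tau> + (K * c + 2 * c + 2) * Tm"
    using risk discarded unfolding c_def by (simp add: algebra_simps)
  moreover have "K * (1 + \<delta>) + 4 \<le> oracle_const \<delta>" "K * (1 + 1/\<delta>) + 1 \<le> oracle_const \<delta>"
    "K * c + 2 * c + 2 \<le> oracle_const \<delta>"
  proof -
    have const: "oracle_const \<delta> = K * (5 + 1/\<delta>) + 10"
      unfolding oracle_const_def K_def dd_def ..
    have "1/\<delta> > 0" using d by simp
    then have "1 + \<delta> \<le> 5 + 1/\<delta>" "1 + 1/\<delta> \<le> 5 + 1/\<delta>" "c \<le> 5 + 1/\<delta>"
      using d c4 by linarith+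
    then have "K * (1 + \<delta>) \<le> K * (5 + 1/\<delta>)" "K * (1 + 1/\<delta>) \<le> K * (5 + 1/\<delta>)" "K * c \<le> K * (5 + 1/\<delta>)"
      using K0 by (auto intro: mult_left_mono)
    then show "K * (1 + \<delta>) + 4 \<le> oracle_const \<delta>" "K * (1 + 1/\<delta>) + 1 \<le> oracle_const \<delta>"
      "K * c + 2 * c + 2 \<le> oracle_const \<delta>"
      unfolding const using c4 by linarith+
  qed
  ultimately have "(K * (1 + \<delta>) + 4) * V \<le> oracle_const \<delta> * V"
    "(K * (1 + 1/\<delta>) + 1) * \<tau> \<le> oracle_const \<delta> * \<tau>"
    "(K * c + 2 * c + 2) * Tm \<le> oracle_const \<delta> * Tm"
    and F: "F \<le> (K * (1 + \<delta>) + 4) * V + (K * (1 + 1/\<delta>) + 1) * \<tau> + (K * c + 2 * c + 2) * Tm"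
    using nonneg by (auto intro: mult_right_mono)
  then show ?thesis by (simp add: distrib_left)
qed

context
  fixes \<beta> \<delta> V :: real and p r :: nat and est and Y \<Theta> E :: "nat \<times> nat \<Rightarrow> real"
  assumes b: "\<beta> > 0" and d: "0 < \<delta>" "\<delta> < 1"
    and est: "is_pen_estimator \<beta> \<delta> p r est"
    and Y: "\<And>ij. Y ij = \<Theta> ij + E ij"
    and noise: "\<And>U. U \<subseteq> {..<p} \<Longrightarrow> energy r U E \<le> tsum \<beta> p r (card U) + V"
begin

lemma noise_energy_le:
  assumes "U \<subseteq> {..<p}" "card U \<le> m" "m \<le> p"
  shows "energy r U E \<le> tsum \<beta> p r m + V"
  using noise[OF assms(1)] tsum_mono[OF b assms(2,3), of r] by simp

lemma excess_level_nonneg: "V \<ge> 0"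
  using noise[of "{}"] by (simp add: energy_def tsum_def)

text \<open>Fit of the estimator on its own support: the penalty pays for the noise there.\<close>
lemma fit_on_support:
  assumes J: "J \<subseteq> {..<p}"
  defines "S \<equiv> row_supp p r (est Y)"
  shows "energy r S (\<lambda>ij. Y ij - est Y ij) + (1 + \<delta>)\<^sup>2 * tsum \<beta> p r (card S)
         \<le> (1 + \<delta>) * (tsum \<beta> p r (card S) + V) + (1 + 1/\<delta>) * energy r ({..<p} - J) \<Theta>
           + (1 + \<delta>)\<^sup>2 * tsum \<beta> p r (card J)"
proof -
  have SP: "S \<subseteq> {..<p}" unfolding S_def by (rule row_supp_subset)
  have fS: "finite S" using SP finite_subset by blast
  have "energy r ({..<p} - J) Y = energy r (S - J) Y + energy r (({..<p} - J) - (S - J)) Y"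
    using SP by (intro energy_split) auto
  also have "energy r (({..<p} - J) - (S - J)) Y \<le> energy r ({..<p} - S) Y"
    by (intro energy_mono) auto
  finally have "energy r ({..<p} - J) Y \<le> energy r (S - J) Y + energy r ({..<p} - S) Y" by simp
  moreover have "energy r (S - J) Y \<le> (1 + \<delta>) * energy r (S - J) E + (1 + 1/\<delta>) * energy r (S - J) \<Theta>"
    by (rule energy_add_le_weighted[OF d(1) Y])
  moreover have "(1 + \<delta>) * energy r (S - J) E \<le> (1 + \<delta>) * (tsum \<beta> p r (card S) + V)"
  proof -
    have "card S \<le> p" using SP card_mono[of "{..<p}" S] by simp
    then have "energy r (S - J) E \<le> tsum \<beta> p r (card S) + V"
      using SP fS by (intro noise_energy_le) (auto intro: card_mono)
    then show ?thesis using d by (intro mult_left_mono) auto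
  qed
  moreover have "(1 + 1/\<delta>) * energy r (S - J) \<Theta> \<le> (1 + 1/\<delta>) * energy r ({..<p} - J) \<Theta>"
    using d SP by (intro mult_left_mono energy_mono) auto
  ultimately show ?thesis
    using estimator_vs_restriction[OF b est J, of Y, folded S_def] by linarith
qed

text \<open>Rows of J that the estimator discards carry little data energy: otherwise adding them
  to the support would lower the objective.\<close>
lemma discarded_rows:
  assumes J: "J \<subseteq> {..<p}"
  defines "S \<equiv> row_supp p r (est Y)"
  shows "energy r (J - S) Y \<le> (1 + \<delta>)\<^sup>2 * tsum \<beta> p r (card J)"
proof -
  have SP: "S \<subseteq> {..<p}" unfolding S_def by (rule row_supp_subset)
  have SJ: "S \<union> J \<subseteq> {..<p}" using SP J by auto
  have fin: "finite S" "finite J" using SP J finite_subset by blast+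
  have "({..<p} - S) - (J - S) = {..<p} - (S \<union> J)" by auto
  then have "energy r ({..<p} - S) Y = energy r (J - S) Y + energy r ({..<p} - (S \<union> J)) Y"
    using J energy_split[of "{..<p} - S" "J - S" r Y] by auto
  moreover have "tsum \<beta> p r (card (S \<union> J)) - tsum \<beta> p r (card S) \<le> tsum \<beta> p r (card J)"
  proof -
    have "card (S \<union> J) \<le> p" using card_mono[OF _ SJ] by simp
    moreover have "card S \<le> card (S \<union> J)" using fin by (intro card_mono) auto
    ultimately have "tsum \<beta> p r (card (S \<union> J)) - tsum \<beta> p r (card S)
                     \<le> tsum \<beta> p r (card (S \<union> J) - card S)"
      by (intro tsum_diff_le[OF b])
    also have "\<dots> \<le> tsum \<beta> p r (card J)"
      using card_Un_le[of S J] J card_mono[of "{..<p}" J] by (intro tsum_mono[OF b]) auto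
    finally show ?thesis .
  qed
  then have "(1 + \<delta>)\<^sup>2 * tsum \<beta> p r (card (S \<union> J)) - (1 + \<delta>)\<^sup>2 * tsum \<beta> p r (card S)
             \<le> (1 + \<delta>)\<^sup>2 * tsum \<beta> p r (card J)"
    by (simp add: mult_left_mono flip: right_diff_distrib)
  ultimately show ?thesis
    using estimator_vs_restriction[OF b est SJ, of Y, folded S_def]
      energy_nonneg[of r S "\<lambda>ij. Y ij - est Y ij"] by linarith
qed

text \<open>The risk on the estimated support is controlled by the fit and the noise there;
  off the support it is the signal, split into the part in J and the tail outside J.\<close>
lemma risk_decomposition:
  assumes J: "J \<subseteq> {..<p}"
  defines "S \<equiv> row_supp p r (est Y)"
  shows "frob2 p r (\<lambda>ij. est Y ij - \<Theta> ij)
         \<le> 2 * energy r S (\<lambda>ij. Y ij - est Y ij) + 2 * (tsum \<beta> p r (card S) + V)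
           + 2 * energy r (J - S) Y + 2 * (tsum \<beta> p r (card J) + V) + energy r ({..<p} - J) \<Theta>"
proof -
  have SP: "S \<subseteq> {..<p}" unfolding S_def by (rule row_supp_subset)
  have on_S: "energy r S (\<lambda>ij. est Y ij - \<Theta> ij) \<le> 2 * energy r S (\<lambda>ij. Y ij - est Y ij) + 2 * energy r S E"
    using energy_add_le[of "\<lambda>ij. est Y ij - \<Theta> ij" "\<lambda>ij. est Y ij - Y ij" E r S]
    by (simp add: Y energy_diff_commute[of r S "est Y"])
  have "energy r S E \<le> tsum \<beta> p r (card S) + V"
    using SP card_mono[of "{..<p}" S] by (intro noise_energy_le) auto
  moreover have off_S: "energy r ({..<p} - S) (\<lambda>ij. est Y ij - \<Theta> ij) = energy r ({..<p} - S) \<Theta>"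
  proof -
    have "energy r ({..<p} - S) (\<lambda>ij. est Y ij - \<Theta> ij) = energy r ({..<p} - S) (\<lambda>ij. - \<Theta> ij)"
      by (rule energy_cong) (auto simp: S_def row_outside_supp)
    then show ?thesis by (simp add: energy_uminus)
  qed
  moreover have "energy r ({..<p} - S) \<Theta> \<le> energy r (J - S) \<Theta> + energy r ({..<p} - J) \<Theta>"
  proof -
    have "energy r ({..<p} - S) \<Theta> = energy r (J - S) \<Theta> + energy r (({..<p} - S) - (J - S)) \<Theta>"
      using J by (intro energy_split) auto
    moreover have "energy r (({..<p} - S) - (J - S)) \<Theta> \<le> energy r ({..<p} - J) \<Theta>"
      by (intro energy_mono) auto
    ultimately show ?thesis by simp
  qed
  moreover have "energy r (J - S) \<Theta> \<le> 2 * energy r (J - S) Y + 2 * energy r (J - S) E"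
    using energy_add_le[of \<Theta> Y "\<lambda>ij. - E ij" r "J - S"] by (simp add: Y energy_uminus)
  moreover have "energy r (J - S) E \<le> tsum \<beta> p r (card J) + V"
    using J card_mono[of "{..<p}" J] finite_subset[OF J] by (intro noise_energy_le) (auto intro: card_mono)
  moreover have "frob2 p r (\<lambda>ij. est Y ij - \<Theta> ij)
      = energy r S (\<lambda>ij. est Y ij - \<Theta> ij) + energy r ({..<p} - S) (\<lambda>ij. est Y ij - \<Theta> ij)"
    unfolding frob2_rows using SP by (intro energy_split) auto
  ultimately show ?thesis using on_S by (smt (verit))
qed

lemma oracle_inequality:
  assumes J: "J \<subseteq> {..<p}"
  shows "frob2 p r (\<lambda>ij. est Y ij - \<Theta> ij)
         \<le> oracle_const \<delta> * (V + energy r ({..<p} - J) \<Theta> + tsum \<beta> p r (card J))"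
proof -
  define S where "S = row_supp p r (est Y)"
  have "card S \<le> p" "card J \<le> p"
    using card_mono[OF _ row_supp_subset, of p r "est Y"] card_mono[OF _ J] by (auto simp: S_def)
  then have "tsum \<beta> p r (card S) \<ge> 0" "tsum \<beta> p r (card J) \<ge> 0"
    using tsum_nonneg[OF b] by auto
  moreover have "energy r S (\<lambda>ij. Y ij - est Y ij) \<ge> 0" "energy r ({..<p} - J) \<Theta> \<ge> 0"
    by (rule energy_nonneg)+
  ultimately show ?thesis
    using oracle_arith[OF d _ _ _ excess_level_nonneg _ fit_on_support[OF J, folded S_def]
        risk_decomposition[OF J, folded S_def] discarded_rows[OF J, folded S_def]] by blast
qed

end

section \<open>Approximation of weak-l_q signals\<close>

text \<open>Tangent line below the convex function x powr g (g <= 0).\<close>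
lemma powr_tangent_le:
  fixes x y g :: real assumes x: "x > 0" and y: "y > 0" and g: "g \<le> 0"
  shows "y powr g + g * y powr (g - 1) * (x - y) \<le> x powr g"
proof -
  have "1 + g * (x / y - 1) \<le> (x / y) powr g"
  proof -
    have "g * (x / y - 1) \<le> g * ln (x / y)"
      using ln_le_minus_one[of "x/y"] x y g by (intro mult_left_mono_neg) auto
    also have "1 + g * ln (x / y) \<le> exp (g * ln (x / y))" by (rule exp_ge_add_one_self)
    finally show ?thesis using x y by (simp add: powr_def)
  qed
  then have "y powr g * (1 + g * (x / y - 1)) \<le> y powr g * (x / y) powr g" using y by simp
  moreover have "y powr g * (1 + g * (x / y - 1)) = y powr g + g * y powr (g - 1) * (x - y)"
    using y by (simp add: powr_diff field_simps)
  ultimately show ?thesis using x y by (simp add: powr_divide)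
qed

lemma powr_series_tail:
  fixes a :: real assumes a: "a > 1" and k: "k \<ge> 1"
  shows "(\<Sum>j\<in>{k<..n}. real j powr (-a)) \<le> real k powr (1 - a) / (a - 1)"
proof -
  have term_le: "real (Suc n) powr (-a) \<le> (real n powr (1 - a) - real (Suc n) powr (1 - a)) / (a - 1)"
    if "n \<ge> 1" for n
  proof -
    have "real (Suc n) powr (1 - a) + (1 - a) * real (Suc n) powr ((1 - a) - 1) * (real n - real (Suc n))
          \<le> real n powr (1 - a)"
      by (rule powr_tangent_le) (use a that in auto)
    then show ?thesis using a by (simp add: field_simps)
  qed
  have telescope: "(\<Sum>j\<in>{k<..n}. real j powr (-a)) \<le> (real k powr (1 - a) - real n powr (1 - a)) / (a - 1)"
    if "n \<ge> k" for n
    using that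
  proof (induction n rule: dec_induct)
    case base then show ?case by simp
  next
    case (step n)
    have "{k<..Suc n} = insert (Suc n) {k<..n}" using step by auto
    then have "(\<Sum>j\<in>{k<..Suc n}. real j powr (-a)) = real (Suc n) powr (-a) + (\<Sum>j\<in>{k<..n}. real j powr (-a))"
      by simp
    also have "\<dots> \<le> (real n powr (1 - a) - real (Suc n) powr (1 - a)) / (a - 1)
                    + (real k powr (1 - a) - real n powr (1 - a)) / (a - 1)"
      using term_le[of n] step k by auto
    also have "\<dots> = (real k powr (1 - a) - real (Suc n) powr (1 - a)) / (a - 1)"
      by (simp add: diff_divide_distrib)
    finally show ?case .
  qed
  show ?thesis
  proof (cases "n \<ge> k")
    case True
    then show ?thesis using telescope[OF True] a
      by (smt (verit) divide_right_mono powr_ge_zero)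
  next
    case False then show ?thesis using a by simp
  qed
qed

text \<open>sum_{j=1}^p min(1, (k/j)^a) <= k a/(a-1): the terms are 1 up to j = k and then
  decay like a convergent p-series.\<close>
lemma sum_min_powr_le:
  fixes a :: real assumes a: "a > 1" and k: "1 \<le> k"
  shows "(\<Sum>j=1..p. min 1 ((real k / real j) powr a)) \<le> real k * a / (a - 1)"
proof (cases "p \<le> k")
  case True
  have "(\<Sum>j=1..p. min 1 ((real k / real j) powr a)) \<le> (\<Sum>j=1..p. 1)" by (rule sum_mono) simp
  also have "\<dots> \<le> real k" using True by simp
  also have "\<dots> \<le> real k * a / (a - 1)" using a k by (simp add: field_simps)
  finally show ?thesis .
next
  case False
  have split: "{1..p} = {1..k} \<union> {k<..p}" using False k by auto
  have "(\<Sum>j=1..p. min 1 ((real k / real j) powr a))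
      = (\<Sum>j=1..k. min 1 ((real k / real j) powr a)) + (\<Sum>j\<in>{k<..p}. min 1 ((real k / real j) powr a))"
    unfolding split by (rule sum.union_disjoint) auto
  also have "(\<Sum>j=1..k. min 1 ((real k / real j) powr a)) \<le> (\<Sum>j=1..k. 1)" by (rule sum_mono) simp
  also have "(\<Sum>j\<in>{k<..p}. min 1 ((real k / real j) powr a)) \<le> (\<Sum>j\<in>{k<..p}. real k powr a * real j powr (-a))"
  proof (rule sum_mono)
    fix j assume "j \<in> {k<..p}"
    then have "(real k / real j) powr a = real k powr a * real j powr (-a)"
      unfolding powr_divide powr_minus by (simp add: divide_inverse)
    then show "min 1 ((real k / real j) powr a) \<le> real k powr a * real j powr (-a)" by simp
  qed
  also have "\<dots> = real k powr a * (\<Sum>j\<in>{k<..p}. real j powr (-a))" by (simp add: sum_distrib_left)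
  also have "\<dots> \<le> real k powr a * (real k powr (1 - a) / (a - 1))"
    by (intro mult_left_mono powr_series_tail[OF a k]) auto
  also have "real k powr a * (real k powr (1 - a) / (a - 1)) = real k / (a - 1)"
    using k by (simp add: powr_add[symmetric])
  finally show ?thesis using a by (simp add: field_simps)
qed

lemma row_norm_row_sq: "row_norm r A i = sqrt (row_sq r A i)"
  unfolding row_norm_def row_sq_def ..

lemma sorted_row_norms_props:
  fixes p r :: nat and A :: "nat \<times> nat \<Rightarrow> real"
  defines "L \<equiv> sorted_row_norms p r A"
  shows "length L = p" "\<And>x. x \<in> set L \<Longrightarrow> x \<ge> 0"
    "\<And>g :: real \<Rightarrow> real. (\<Sum>i<p. g (row_norm r A i)) = (\<Sum>j<p. g (L ! j))"
proof -
  define xs where "xs = map (row_norm r A) [0..<p]"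
  have L: "L = rev (sort xs)" unfolding L_def xs_def sorted_row_norms_def ..
  show len: "length L = p" unfolding L xs_def by simp
  show "\<And>x. x \<in> set L \<Longrightarrow> x \<ge> 0" unfolding L xs_def by (auto simp: row_norm_row_sq row_sq_nonneg)
  fix g :: "real \<Rightarrow> real"
  have "mset (map g L) = mset (map g xs)" unfolding L by simp
  then have "sum_list (map g xs) = sum_list (map g L)" by (metis sum_mset_sum_list)
  then show "(\<Sum>i<p. g (row_norm r A i)) = (\<Sum>j<p. g (L ! j))"
    by (simp add: xs_def sum_list_sum_nth len atLeast0LessThan
        sum_set_upt_conv_sum_list_nat[symmetric] comp_def)
qed

lemma weak_lq_entry:
  assumes "q \<noteq> 0" "j \<in> {1..p}"
  shows "real j * (sorted_row_norms p r A ! (j - 1)) powr q \<le> weak_lq q p r A"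
  unfolding weak_lq_def using assms by (auto intro!: Max_ge)

lemma truncated_energy_sparse:
  assumes h: "h \<ge> 0" and card: "card (row_supp p r \<Theta>) \<le> k"
  shows "(\<Sum>i<p. min (row_sq r \<Theta> i) h) \<le> real k * h"
proof -
  define S where "S = row_supp p r \<Theta>"
  have SP: "S \<subseteq> {..<p}" unfolding S_def by (rule row_supp_subset)
  have "(\<Sum>i<p. min (row_sq r \<Theta> i) h) = (\<Sum>i\<in>S. min (row_sq r \<Theta> i) h) + (\<Sum>i\<in>{..<p} - S. min (row_sq r \<Theta> i) h)"
    using SP by (metis sum.subset_diff add.commute finite_lessThan)
  also have "(\<Sum>i\<in>{..<p} - S. min (row_sq r \<Theta> i) h) = 0"
    using h by (intro sum.neutral) (auto simp: S_def row_sq_def row_outside_supp)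
  also have "(\<Sum>i\<in>S. min (row_sq r \<Theta> i) h) \<le> real (card S) * h"
    using sum_mono[of S "\<lambda>i. min (row_sq r \<Theta> i) h" "\<lambda>_. h"] by simp
  also have "\<dots> \<le> real k * h" using card h unfolding S_def by (intro mult_right_mono) auto
  finally show ?thesis by simp
qed

lemma sorted_row_norm_sq_le:
  assumes q: "0 < q" and h: "h > 0" and j: "j < p"
    and weak: "weak_lq q p r \<Theta> \<le> h powr (q / 2) * real k"
  shows "(sorted_row_norms p r \<Theta> ! j)\<^sup>2 \<le> h * (real k / real (Suc j)) powr (2 / q)"
proof -
  define \<rho> where "\<rho> = sorted_row_norms p r \<Theta> ! j"
  have "\<rho> \<ge> 0" unfolding \<rho>_def using sorted_row_norms_props(1,2)[where p=p and r=r and A=\<Theta>] j by simp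
  show ?thesis
  proof (cases "\<rho> = 0")
    case True then show ?thesis unfolding \<rho>_def[symmetric] using h by simp
  next
    case False
    with \<open>\<rho> \<ge> 0\<close> have \<rho>0: "\<rho> > 0" by simp
    have "real (Suc j) * \<rho> powr q \<le> h powr (q / 2) * real k"
      using weak_lq_entry[of q "Suc j" p r \<Theta>] q j weak unfolding \<rho>_def by simp
    then have "\<rho> powr q \<le> h powr (q / 2) * (real k / real (Suc j))"
      by (simp add: field_simps mult.commute)
    then have "(\<rho> powr q) powr (2 / q) \<le> (h powr (q / 2) * (real k / real (Suc j))) powr (2 / q)"
      using q by (intro powr_mono2) auto
    moreover have "(\<rho> powr q) powr (2 / q) = \<rho>\<^sup>2"
      using q \<rho>0 by (simp add: powr_powr)
    moreover have "(h powr (q / 2)) powr (2 / q) = h" using h q by (simp add: powr_powr)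
    then have "(h powr (q / 2) * (real k / real (Suc j))) powr (2 / q) = h * (real k / real (Suc j)) powr (2 / q)"
      by (simp only: powr_mult)
    ultimately show ?thesis unfolding \<rho>_def by simp
  qed
qed

lemma truncated_energy_weak_lq:
  assumes q: "0 < q" "q < 2" and h: "h > 0" and k: "1 \<le> k"
    and weak: "weak_lq q p r \<Theta> \<le> h powr (q / 2) * real k"
  shows "(\<Sum>i<p. min (row_sq r \<Theta> i) h) \<le> 2/(2-q) * real k * h"
proof -
  define L where "L = sorted_row_norms p r \<Theta>"
  define a where "a = 2 / q"
  have a1: "a > 1" unfolding a_def using q by (simp add: field_simps)
  note L_props = sorted_row_norms_props[where p=p and r=r and A=\<Theta>, folded L_def]
  have entry: "min ((L ! j)\<^sup>2) h \<le> h * min 1 ((real k / real (Suc j)) powr a)" if "j < p" for j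
    using sorted_row_norm_sq_le[OF q(1) h that weak] h
    unfolding L_def a_def by (simp add: min_mult_distrib_left)
  have "(\<Sum>i<p. min (row_sq r \<Theta> i) h) = (\<Sum>i<p. (\<lambda>x. min (x\<^sup>2) h) (row_norm r \<Theta> i))"
    by (simp add: row_norm_row_sq row_sq_nonneg)
  also have "\<dots> = (\<Sum>j<p. min ((L ! j)\<^sup>2) h)" by (rule L_props(3))
  also have "\<dots> \<le> (\<Sum>j<p. h * min 1 ((real k / real (Suc j)) powr a))"
    using entry by (intro sum_mono) auto
  also have "\<dots> = h * (\<Sum>j=1..p. min 1 ((real k / real j) powr a))"
  proof -
    have "(\<Sum>j<p. min 1 ((real k / real (Suc j)) powr a)) = (\<Sum>j=1..p. min 1 ((real k / real j) powr a))"
      by (rule sum.reindex_bij_witness[of _ "\<lambda>j. j - 1" Suc]) auto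
    then show ?thesis by (simp only: sum_distrib_left[symmetric])
  qed
  also have "\<dots> \<le> h * (real k * a / (a - 1))"
    using sum_min_powr_le[OF a1 k, of p] h by (intro mult_left_mono) auto
  also have "h * (real k * a / (a - 1)) = 2/(2-q) * real k * h"
    unfolding a_def using q by (simp add: field_simps)
  finally show ?thesis .
qed

section \<open>The risk bound\<close>

lemma kprime_range:
  assumes "p \<ge> 1" shows "1 \<le> kprime q \<beta> s' p r" "kprime q \<beta> s' p r \<le> p"
proof -
  define K where "K = {k\<in>{1..p}. tk \<beta> p r k powr (q / 2) * real k \<ge> s'}"
  have "kprime q \<beta> s' p r = (if K = {} then p else Min K)" unfolding kprime_def K_def Let_def ..
  moreover have "K \<noteq> {} \<Longrightarrow> Min K \<in> K" by (rule Min_in) (simp_all add: K_def)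
  ultimately show "1 \<le> kprime q \<beta> s' p r" "kprime q \<beta> s' p r \<le> p"
    using assms unfolding K_def by (auto split: if_splits)
qed

lemma kprime_cases:
  "kprime q \<beta> s' p r = p \<or>
   s' \<le> tk \<beta> p r (kprime q \<beta> s' p r) powr (q / 2) * real (kprime q \<beta> s' p r)"
proof -
  define K where "K = {k\<in>{1..p}. tk \<beta> p r k powr (q / 2) * real k \<ge> s'}"
  have "kprime q \<beta> s' p r = (if K = {} then p else Min K)" unfolding kprime_def K_def Let_def ..
  moreover have "K \<noteq> {} \<Longrightarrow> Min K \<in> K" by (rule Min_in) (simp_all add: K_def)
  ultimately show ?thesis unfolding K_def by (auto split: if_splits)
qed

lemma truncated_energy_bound:
  assumes q: "0 \<le> q" "q < 2" and b: "\<beta> > 0" and p: "p \<ge> 1" and \<Theta>: "\<Theta> \<in> F_q q s' p r"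
  defines "k \<equiv> kprime q \<beta> s' p r"
  shows "(\<Sum>i<p. min (row_sq r \<Theta> i) (tk \<beta> p r k)) \<le> 2/(2-q) * real k * tk \<beta> p r k"
proof -
  define h where "h = tk \<beta> p r k"
  have k: "1 \<le> k" "k \<le> p" unfolding k_def using kprime_range[OF p] by auto
  have h0: "h > 0" unfolding h_def using tk_ge[OF b k, of r] b by simp
  have c1: "1 \<le> 2/(2-q)" using q by (simp add: field_simps)
  have "1 * (real k * h) \<le> 2/(2-q) * (real k * h)" using h0 by (intro mult_right_mono c1) auto
  then have kh: "real k * h \<le> 2/(2-q) * real k * h" by (simp only: mult_1 mult.assoc)
  consider "k = p" | "s' \<le> h powr (q / 2) * real k"
    using kprime_cases[of q \<beta> s' p r] unfolding k_def h_def by blast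
  then have "(\<Sum>i<p. min (row_sq r \<Theta> i) h) \<le> 2/(2-q) * real k * h"
  proof cases
    case 1
    have "(\<Sum>i<p. min (row_sq r \<Theta> i) h) \<le> real k * h"
      using sum_mono[of "{..<p}" "\<lambda>i. min (row_sq r \<Theta> i) h" "\<lambda>_. h"] 1 by simp
    also have "\<dots> \<le> 2/(2-q) * real k * h" by (rule kh)
    finally show ?thesis .
  next
    case 2
    then have weak: "weak_lq q p r \<Theta> \<le> h powr (q / 2) * real k"
      using \<Theta> unfolding F_q_def by simp
    show ?thesis
    proof (cases "q = 0")
      case True
      then have "card (row_supp p r \<Theta>) \<le> k" using weak h0 unfolding weak_lq_def by simp
      then have "(\<Sum>i<p. min (row_sq r \<Theta> i) h) \<le> real k * h"
        using h0 by (intro truncated_energy_sparse) auto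
      also have "\<dots> \<le> 2/(2-q) * real k * h" by (rule kh)
      finally show ?thesis .
    next
      case False
      then show ?thesis using truncated_energy_weak_lq[OF _ q(2) h0 k(1) weak] q by simp
    qed
  qed
  then show ?thesis unfolding h_def .
qed

lemma truncated_energy_split:
  fixes p r :: nat and h :: real and \<Theta> :: "nat \<times> nat \<Rightarrow> real"
  defines "J \<equiv> {i\<in>{..<p}. row_sq r \<Theta> i \<ge> h}"
  shows "(\<Sum>i<p. min (row_sq r \<Theta> i) h) = real (card J) * h + energy r ({..<p} - J) \<Theta>"
proof -
  have JP: "J \<subseteq> {..<p}" unfolding J_def by auto
  have "(\<Sum>i\<in>J. min (row_sq r \<Theta> i) h) = (\<Sum>i\<in>J. h)"
    by (rule sum.cong) (auto simp: J_def)
  moreover have "(\<Sum>i\<in>{..<p} - J. min (row_sq r \<Theta> i) h) = energy r ({..<p} - J) \<Theta>"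
    unfolding energy_def by (rule sum.cong) (auto simp: J_def)
  ultimately show ?thesis
    using sum.subset_diff[OF JP finite_lessThan, of "\<lambda>i. min (row_sq r \<Theta> i) h"] by simp
qed

definition approx_const :: "real \<Rightarrow> real \<Rightarrow> real" where
  "approx_const q \<beta> = 2/(2-q) * (2 + 2*\<beta>) + (2 * (2/(2-q)) + 4*\<beta>*(2/(2-q)) + 2*\<beta>)"

text \<open>The comparison set J of rows with |Theta_i|^2 >= t_k': its signal tail and its
  threshold sum are both O(k' (r + lg p k')).\<close>
lemma comparison_set:
  assumes q: "0 \<le> q" "q < 2" and b: "\<beta> > 0" and p: "p \<ge> 1" and \<Theta>: "\<Theta> \<in> F_q q s' p r"
  defines "k \<equiv> kprime q \<beta> s' p r"
  obtains J where "J \<subseteq> {..<p}"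
    "energy r ({..<p} - J) \<Theta> + tsum \<beta> p r (card J) \<le> approx_const q \<beta> * (real k * (real r + lg p k))"
proof -
  define h where "h = tk \<beta> p r k"
  define c where "c = 2 / (2 - q)"
  define J where "J = {i\<in>{..<p}. row_sq r \<Theta> i \<ge> h}"
  have k: "1 \<le> k" "k \<le> p" unfolding k_def using kprime_range[OF p] by auto
  have c1: "c \<ge> 1" unfolding c_def using q by (simp add: field_simps)
  have h0: "h > 0" unfolding h_def using tk_ge[OF b k, of r] b by simp
  have trunc: "(\<Sum>i<p. min (row_sq r \<Theta> i) h) \<le> c * real k * h"
    using truncated_energy_bound[OF q b p \<Theta>] unfolding h_def c_def k_def .
  have split: "(\<Sum>i<p. min (row_sq r \<Theta> i) h) = real (card J) * h + energy r ({..<p} - J) \<Theta>"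
    unfolding J_def by (rule truncated_energy_split)
  have tail: "energy r ({..<p} - J) \<Theta> \<le> c * (2 + 2*\<beta>) * (real k * (real r + lg p k))"
  proof -
    have "h \<le> 2 * real r + 2 * \<beta> * lg p k" unfolding h_def by (rule tk_le[OF b k])
    also have "\<dots> \<le> (2 + 2*\<beta>) * (real r + lg p k)"
      using b lg_ge_1[OF k] by (simp add: algebra_simps)
    finally have "h \<le> (2 + 2*\<beta>) * (real r + lg p k)" .
    then have "c * real k * h \<le> c * real k * ((2 + 2*\<beta>) * (real r + lg p k))"
      using c1 by (intro mult_left_mono) auto
    then have "c * real k * h \<le> c * (2 + 2*\<beta>) * (real k * (real r + lg p k))"
      by (simp add: algebra_simps)
    moreover have "0 \<le> real (card J) * h" using h0 by simp
    ultimately show ?thesis using trunc split by linarith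
  qed
  have "real (card J) * h \<le> (c * real k) * h"
    using trunc split energy_nonneg[of r "{..<p} - J" \<Theta>] by linarith
  then have "real (card J) \<le> c * real k" using h0 by simp
  moreover have "card J \<le> p" using card_mono[of "{..<p}" J] unfolding J_def by auto
  ultimately have "tsum \<beta> p r (card J) \<le> (2*c + 4*\<beta>*c + 2*\<beta>) * (real k * (real r + lg p k))"
    using tsum_upper[OF b _ k _ c1] by blast
  with tail have "energy r ({..<p} - J) \<Theta> + tsum \<beta> p r (card J) \<le> approx_const q \<beta> * (real k * (real r + lg p k))"
    unfolding approx_const_def c_def[symmetric] by (simp add: algebra_simps)
  then show ?thesis using that[of J] unfolding J_def by auto
qed

lemma nn_integral_le_affine:
  assumes M: "prob_space M" and V: "V \<in> borel_measurable M" "\<And>x. V x \<ge> 0"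
    and C: "C \<ge> 0" and B: "B \<ge> 0" and a0: "a \<ge> 0"
    and f: "\<And>x. f x \<le> C * (V x + B)" and EV: "(\<integral>\<^sup>+ x. ennreal (V x) \<partial>M) \<le> ennreal a"
  shows "(\<integral>\<^sup>+ x. ennreal (f x) \<partial>M) \<le> ennreal (C * (a + B))"
proof -
  interpret prob_space M by (rule M)
  have "(\<integral>\<^sup>+ x. ennreal (f x) \<partial>M) \<le> (\<integral>\<^sup>+ x. ennreal C * (ennreal (V x) + ennreal B) \<partial>M)"
  proof (rule nn_integral_mono)
    fix x
    have "ennreal (f x) \<le> ennreal (C * (V x + B))" using f by (rule ennreal_leI)
    also have "\<dots> = ennreal C * (ennreal (V x) + ennreal B)"
      using V(2)[of x] C B by (simp add: ennreal_mult ennreal_plus)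
    finally show "ennreal (f x) \<le> ennreal C * (ennreal (V x) + ennreal B)" .
  qed
  also have "\<dots> = ennreal C * ((\<integral>\<^sup>+ x. ennreal (V x) \<partial>M) + ennreal B)"
    using V(1) by (simp add: nn_integral_cmult nn_integral_add emeasure_space_1)
  also have "\<dots> \<le> ennreal C * (ennreal a + ennreal B)"
    using EV by (intro mult_left_mono add_right_mono) auto
  also have "\<dots> = ennreal (C * (a + B))" using C B a0 by (simp add: ennreal_mult ennreal_plus)
  finally show ?thesis .
qed

definition risk_const :: "real \<Rightarrow> real \<Rightarrow> real \<Rightarrow> real" where
  "risk_const q \<beta> \<delta> = oracle_const \<delta> * (3 / (1 - exp (- (\<beta>/2 - 1))) + approx_const q \<beta>)"

lemma risk_const_pos:
  assumes "0 \<le> q" "q < 2" "\<beta> > 2" "0 < \<delta>"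
  shows "risk_const q \<beta> \<delta> > 0"
proof -
  have "3 / (1 - exp (- (\<beta>/2 - 1))) > 0" "approx_const q \<beta> > 0"
    using assms unfolding approx_const_def by (auto intro!: add_pos_pos mult_pos_pos)
  then show ?thesis unfolding risk_const_def
    by (intro mult_pos_pos add_pos_pos oracle_const_pos assms(4))
qed

text \<open>The risk bound for fixed dimensions: the oracle inequality with V = V(E) and the
  comparison set of the approximation step, integrated over the noise.\<close>
lemma risk_bound:
  assumes q: "0 \<le> q" "q < 2" and b: "\<beta> > 2" and d: "0 < \<delta>" "\<delta> < 1"
    and p: "p \<ge> 1" and r: "r \<ge> 1" and \<Theta>: "\<Theta> \<in> F_q q s' p r"
    and est: "is_pen_estimator \<beta> \<delta> p r est"
  defines "k \<equiv> kprime q \<beta> s' p r"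
  shows "(\<integral>\<^sup>+ E. ennreal (frob2 p r (\<lambda>ij. est (\<lambda>kl. \<Theta> kl + E kl) ij - \<Theta> ij)) \<partial>noise p r)
         \<le> ennreal (risk_const q \<beta> \<delta> * (real k * (real r + lg p k)))"
proof -
  have b0: "\<beta> > 0" using b by simp
  have k: "1 \<le> k" "k \<le> p" unfolding k_def using kprime_range[OF p] by auto
  define X where "X = real k * (real r + lg p k)"
  define q0 where "q0 = exp (- (\<beta>/2 - 1))"
  have q0: "q0 < 1" unfolding q0_def using b by simp
  obtain J where J: "J \<subseteq> {..<p}"
    and approx: "energy r ({..<p} - J) \<Theta> + tsum \<beta> p r (card J) \<le> approx_const q \<beta> * X"
    using comparison_set[OF q b0 p \<Theta>] unfolding k_def X_def by blast
  define B where "B = energy r ({..<p} - J) \<Theta> + tsum \<beta> p r (card J)"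
  have B0: "B \<ge> 0" unfolding B_def
    using energy_nonneg tsum_nonneg[OF b0] card_mono[OF _ J] by (simp add: add_nonneg_nonneg)
  have pointwise: "frob2 p r (\<lambda>ij. est (\<lambda>kl. \<Theta> kl + E kl) ij - \<Theta> ij)
                   \<le> oracle_const \<delta> * (excess \<beta> p r E + B)" for E
    using oracle_inequality[where Y = "\<lambda>kl. \<Theta> kl + E kl" and \<Theta> = \<Theta> and E = E,
        OF b0 d est _ energy_le_excess J]
    unfolding B_def by (simp add: add.assoc)
  have "(\<integral>\<^sup>+ E. ennreal (frob2 p r (\<lambda>ij. est (\<lambda>kl. \<Theta> kl + E kl) ij - \<Theta> ij)) \<partial>noise p r)
        \<le> ennreal (oracle_const \<delta> * ((real r + 2) / (1 - q0) + B))"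
    using q0 oracle_const_pos[OF d(1)] B0
    by (intro nn_integral_le_affine[OF prob_space_noise excess_measurable excess_nonneg _ _ _
          pointwise excess_expectation[OF b r, folded q0_def]]) auto
  also have "oracle_const \<delta> * ((real r + 2) / (1 - q0) + B) \<le> risk_const q \<beta> \<delta> * X"
  proof -
    have "real r + 2 \<le> 3 * X" unfolding X_def using k lg_ge_1[OF k] r
      by (smt (verit) mult_le_cancel_right1 of_nat_1 of_nat_le_iff)
    then have "(real r + 2) / (1 - q0) \<le> 3 / (1 - q0) * X" using q0 by (simp add: divide_right_mono)
    then have "(real r + 2) / (1 - q0) + B \<le> (3 / (1 - q0) + approx_const q \<beta>) * X"
      using approx unfolding B_def by (simp add: algebra_simps)
    then show ?thesis unfolding risk_const_def q0_def[symmetric]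
      using oracle_const_pos[OF d(1)] by (simp add: mult_left_mono mult.assoc)
  qed
  finally show ?thesis unfolding X_def by (simp add: ennreal_leI)
qed

theorem theorem6:
  fixes q \<beta> \<delta> :: real
  assumes "0 \<le> q" "q < 2" "\<beta> > 2" "0 < \<delta>" "\<delta> < 1"
  shows "\<exists>C>0. \<forall>(p::nat) (r::nat) (s'::real) \<Theta> est.
           p \<ge> 1 \<longrightarrow> r \<ge> 1 \<longrightarrow> s' > 0 \<longrightarrow>
           \<Theta> \<in> F_q q s' p r \<longrightarrow> is_pen_estimator \<beta> \<delta> p r est \<longrightarrow>
           (\<integral>\<^sup>+ E. ennreal (frob2 p r (\<lambda>ij. est (\<lambda>kl. \<Theta> kl + E kl) ij - \<Theta> ij)) \<partial>noise p r)
             \<le> ennreal (C * real (kprime q \<beta> s' p r)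
                  * (real r + ln (exp 1 * real p / real (kprime q \<beta> s' p r))))"
proof (intro exI[of _ "risk_const q \<beta> \<delta>"] conjI allI impI)
  show "risk_const q \<beta> \<delta> > 0" using risk_const_pos assms by simp
  fix p r :: nat and s' :: real and \<Theta> :: "nat \<times> nat \<Rightarrow> real" and est
  assume "p \<ge> 1" "r \<ge> 1" "\<Theta> \<in> F_q q s' p r" "is_pen_estimator \<beta> \<delta> p r est"
  from risk_bound[OF assms this]
  show "(\<integral>\<^sup>+ E. ennreal (frob2 p r (\<lambda>ij. est (\<lambda>kl. \<Theta> kl + E kl) ij - \<Theta> ij)) \<partial>noise p r)
        \<le> ennreal (risk_const q \<beta> \<delta> * real (kprime q \<beta> s' p r)
             * (real r + ln (exp 1 * real p / real (kprime q \<beta> s' p r))))"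
    by (simp add: lg_def mult.assoc)
qed

end
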